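(* Let $\mathcal{X}=[0,1]^2$, let $\mathcal{G}$ be the class of monotone allocations and $\{\mathcal{G}_k\}_{k\ge1}$ the piecewise-linear monotone sieve defined in the context. Fix $M<\infty$, $\kappa\in(0,1/2)$, $A>0$, and let $\mathcal{P}_r$ be the set of distributions under which $X$ has a density with respect to Lebesgue measure on $[0,1]^2$ bounded above by $A$. Then $$\sup_{P\in\mathcal{P}_r\cap\mathcal{P}(M,\kappa)}\big(W^*_{\mathcal{G}}-W^*_{\mathcal{G}_k}\big)\le A\frac{M}{\kappa}2^{-k}\quad\text{for every }k\ge1.$$
   Context: $P$ is the distribution of $(Y,D,X)$ with outcome $Y\in\mathbb{R}$, treatment $D\in\{0,1\}$, covariate $X=(X_1,X_2)\in[0,1]^2$; $e(x)=E_P[D\mid X=x]$. $\mathcal{P}(M,\kappa)$: distributions with support of $Y$ in $[-M/2,M/2]$ and $e(x)\in[\kappa,1-\kappa]$ for all $x$. Welfare: $W(G)=E_P[(\frac{YD}{e(X)}-\frac{Y(1-D)}{1-e(X)})\mathbf{1}\{X\in G\}]$, $W^*_{\mathcal{A}}=\sup_{G\in\mathcal{A}}W(G)$. Monotone allocations: $\mathcal{G}=\{\{(x_1,x_2)\in[0,1]^2:x_2\le f(x_1)\}: f:[0,1]\to[0,1]\text{ non-increasing}\}$. Sieve: for an integer $T$ and $0\le j\le T$, $\psi_{T,j}(x)=1-|Tx-j|$ for $x\in[\frac{j-1}{T},\frac{j+1}{T}]\cap[0,1]$ and $0$ otherwise; with $T=2^{k-1}$, $\mathcal{G}_k=\{\{(x_1,x_2)\in[0,1]^2:x_2\le\sum_{j=0}^T\theta_j\psi_{T,j}(x_1)\}:\theta_0\ge\theta_1\ge\dots\ge\theta_T,\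 \theta_j\in\mathbb{R}\}$ (allocations whose boundary is a non-increasing piecewise-linear function with kinks only at the points $j/T$). *)

theory Defs
  imports "HOL-Probability.Probability"
begin

type_synonym obs = "real \<times> real \<times> (real \<times> real)"

definition Yv :: "obs \<Rightarrow> real" where "Yv \<omega> = fst \<omega>"
definition Dv :: "obs \<Rightarrow> real" where "Dv \<omega> = fst (snd \<omega>)"
definition Xv :: "obs \<Rightarrow> real \<times> real" where "Xv \<omega> = snd (snd \<omega>)"

definition unit_sq :: "(real \<times> real) set" where
  "unit_sq = {0..1} \<times> {0..1}"

text \<open>e is a version of the propensity score E_P[D | X = x]: Borel measurable and
  E[D 1{X \<in> B}] = E[e(X) 1{X \<in> B}] for every Borel B.\<close>
definition is_propensity :: "obs measure \<Rightarrow> (real \<times> real \<Rightarrow> real) \<Rightarrow> bool" where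
  "is_propensity P e \<longleftrightarrow> e \<in> borel_measurable borel \<and>
     (\<forall>B \<in> sets (borel :: (real \<times> real) measure).
        (\<integral>\<omega>. Dv \<omega> * indicator B (Xv \<omega>) \<partial>P) = (\<integral>\<omega>. e (Xv \<omega>) * indicator B (Xv \<omega>) \<partial>P))"

definition in_P_M_kappa :: "real \<Rightarrow> real \<Rightarrow> obs measure \<Rightarrow> (real \<times> real \<Rightarrow> real) \<Rightarrow> bool" where
  "in_P_M_kappa M \<kappa> P e \<longleftrightarrow>
     prob_space P \<and> sets P = sets (borel :: obs measure) \<and>
     (AE \<omega> in P. Yv \<omega> \<in> {-M/2..M/2}) \<and>
     (AE \<omega> in P. Dv \<omega> \<in> {0,1}) \<and>
     (AE \<omega> in P. Xv \<omega> \<in> unit_sq) \<and>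
     is_propensity P e \<and>
     (\<forall>x \<in> unit_sq. \<kappa> \<le> e x \<and> e x \<le> 1 - \<kappa>)"

definition density_bounded :: "real \<Rightarrow> obs measure \<Rightarrow> bool" where
  "density_bounded A P \<longleftrightarrow>
     (\<exists>f :: real \<times> real \<Rightarrow> real. f \<in> borel_measurable lborel \<and>
        (\<forall>x. 0 \<le> f x \<and> f x \<le> A) \<and>
        distr P lborel Xv = density lborel (\<lambda>x. ennreal (f x)))"

definition welfare :: "obs measure \<Rightarrow> (real \<times> real \<Rightarrow> real) \<Rightarrow> (real \<times> real) set \<Rightarrow> real" where
  "welfare P e G =
     (\<integral>\<omega>. (Yv \<omega> * Dv \<omega> / e (Xv \<omega>) - Yv \<omega> * (1 - Dv \<omega>) / (1 - e (Xv \<omega>)))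
            * indicator G (Xv \<omega>) \<partial>P)"

definition opt_welfare :: "obs measure \<Rightarrow> (real \<times> real \<Rightarrow> real) \<Rightarrow> (real \<times> real) set set \<Rightarrow> real" where
  "opt_welfare P e \<A> = (SUP G\<in>\<A>. welfare P e G)"

definition monotone_allocs :: "(real \<times> real) set set" where
  "monotone_allocs =
     {{x \<in> unit_sq. snd x \<le> f (fst x)} | f :: real \<Rightarrow> real.
        (\<forall>t \<in> {0..1}. f t \<in> {0..1}) \<and>
        (\<forall>s t. 0 \<le> s \<longrightarrow> s \<le> t \<longrightarrow> t \<le> 1 \<longrightarrow> f t \<le> f s)}"

definition hat_fn :: "nat \<Rightarrow> nat \<Rightarrow> real \<Rightarrow> real" where
  "hat_fn T j x =
     (if x \<in> {(real j - 1) / real T .. (real j + 1) / real T} \<inter> {0..1}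
      then 1 - \<bar>real T * x - real j\<bar> else 0)"

definition sieve :: "nat \<Rightarrow> (real \<times> real) set set" where
  "sieve k =
     (let T = 2 ^ (k - 1) in
      {{x \<in> unit_sq. snd x \<le> (\<Sum>j = 0..T. \<theta> j * hat_fn T j (fst x))} | \<theta> :: nat \<Rightarrow> real.
         \<forall>j < T. \<theta> (Suc j) \<le> \<theta> j})"

end

theory Submission imports Defs begin

text \<open>A monotone allocation with boundary f is approximated by the sieve element whose boundary is
  the piecewise-linear interpolant of f at the grid points j/T, T = 2^(k-1). On each grid cell both
  boundaries lie between f((j+1)/T) and f(j/T), so the two allocations differ only inside a staircase
  of boxes whose total area telescopes to at most (f 0 - f 1)/T \<le> 1/T. As X has density at most A
  and the inverse-propensity-weighted score is bounded by M/(2\<kappa>), the welfare loss is at most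
  (M/(2\<kappa>)) A/T = A (M/\<kappa>) 2^(-k).\<close>

lemma cSUP_le_cSUP_plus:
  fixes f :: "'a \<Rightarrow> real"
  assumes "A \<noteq> {}" "bdd_above (f ` B)" "\<And>a. a \<in> A \<Longrightarrow> \<exists>b \<in> B. f a \<le> f b + d"
  shows "(SUP a\<in>A. f a) \<le> (SUP b\<in>B. f b) + d"
proof (rule cSUP_least[OF assms(1)])
  fix a assume "a \<in> A"
  then obtain b where "b \<in> B" "f a \<le> f b + d" using assms(3) by blast
  moreover have "f b \<le> (SUP b\<in>B. f b)" using \<open>b \<in> B\<close> assms(2) by (rule cSUP_upper)
  ultimately show "f a \<le> (SUP b\<in>B. f b) + d" by linarith
qed

lemma sets_Times_atLeastAtMost:
  fixes a b c d :: real
  shows "{a..b} \<times> {c..d} \<in> sets borel"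
  unfolding borel_prod[symmetric] by (intro pair_measureI) auto

lemma emeasure_Times_atLeastAtMost:
  fixes a b c d :: real
  assumes "a \<le> b" "c \<le> d"
  shows "emeasure lborel ({a..b} \<times> {c..d}) = ennreal ((b - a) * (d - c))"
  using assms
  by (simp add: lborel_prod[symmetric] lborel.emeasure_pair_measure_Times ennreal_mult)

lemma (in prob_space) integral_le_of_AE_le:
  fixes f :: "'a \<Rightarrow> real"
  assumes "AE x in M. f x \<le> c" "0 \<le> c"
  shows "(\<integral>x. f x \<partial>M) \<le> c"
  using assms by (cases "integrable M f") (auto simp: integral_le_const not_integrable_integral_eq)

lemma (in prob_space) integral_indicator_diff_le:
  fixes \<psi> :: "'a \<Rightarrow> real" and X :: "'a \<Rightarrow> 'b"
  assumes [measurable]: "\<psi> \<in> borel_measurable M" "X \<in> measurable M N"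
    "S \<in> sets N" "S' \<in> sets N" "B \<in> sets N"
    and bound: "AE \<omega> in M. \<bar>\<psi> \<omega>\<bar> \<le> c"
    and agree: "\<And>x. x \<notin> B \<Longrightarrow> x \<in> S \<longleftrightarrow> x \<in> S'"
  shows "(\<integral>\<omega>. \<psi> \<omega> * indicator S (X \<omega>) \<partial>M) - (\<integral>\<omega>. \<psi> \<omega> * indicator S' (X \<omega>) \<partial>M)
    \<le> c * prob (X -` B \<inter> space M)"
proof -
  from bound have "AE \<omega> in M. 0 \<le> c" by eventually_elim auto
  then have c: "0 \<le> c" by simp
  have events: "X -` B \<inter> space M \<in> events" by measurable
  have integrable: "integrable M (\<lambda>\<omega>. \<psi> \<omega> * indicator U (X \<omega>))"
    if [measurable]: "U \<in> sets N" for U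
  proof (rule Bochner_Integration.integrable_bound[where f="\<lambda>_. c"])
    show "AE \<omega> in M. norm (\<psi> \<omega> * indicator U (X \<omega>)) \<le> norm c"
      using bound by eventually_elim (use c in \<open>auto simp: indicator_def\<close>)
  qed simp_all
  have "(\<integral>\<omega>. \<psi> \<omega> * indicator S (X \<omega>) \<partial>M) - (\<integral>\<omega>. \<psi> \<omega> * indicator S' (X \<omega>) \<partial>M)
      = (\<integral>\<omega>. \<psi> \<omega> * indicator S (X \<omega>) - \<psi> \<omega> * indicator S' (X \<omega>) \<partial>M)"
    by (simp add: integrable)
  also have "\<dots> \<le> (\<integral>\<omega>. c * indicator (X -` B \<inter> space M) \<omega> \<partial>M)"
  proof (rule integral_mono_AE)
    show "AE \<omega> in M. \<psi> \<omega> * indicator S (X \<omega>) - \<psi> \<omega> * indicator S' (X \<omega>)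
        \<le> c * indicator (X -` B \<inter> space M) \<omega>"
      using bound AE_space
    proof eventually_elim
      case (elim \<omega>)
      then show ?case
        using agree[of "X \<omega>"] c by (cases "X \<omega> \<in> B") (auto simp: indicator_def)
    qed
  qed (use events in \<open>simp_all add: integrable integrable_real_indicator less_top[symmetric]\<close>)
  also have "\<dots> = c * prob (X -` B \<inter> space M)"
    by simp
  finally show ?thesis .
qed

subsection \<open>Monotone boundaries and their piecewise-linear interpolants\<close>

definition subgraph :: "(real \<Rightarrow> real) \<Rightarrow> (real \<times> real) set" where
  "subgraph g = {x \<in> unit_sq. snd x \<le> g (fst x)}"

definition lin_interp :: "nat \<Rightarrow> (real \<Rightarrow> real) \<Rightarrow> real \<Rightarrow> real" where
  "lin_interp T f t = (\<Sum>i = 0..T. f (real i / T) * hat_fn T i t)"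

definition staircase :: "nat \<Rightarrow> (real \<Rightarrow> real) \<Rightarrow> (real \<times> real) set" where
  "staircase T f =
     (\<Union>j<T. {real j / T .. real (Suc j) / T} \<times> {f (real (Suc j) / T) .. f (real j / T)})"

lemma monotone_allocsE:
  assumes "G \<in> monotone_allocs"
  obtains f where "G = subgraph f" "f ` {0..1} \<subseteq> {0..1}" "antimono_on {0..1} f"
proof -
  obtain f where "G = subgraph f" "\<forall>t \<in> {0..1}. f t \<in> {0..1}"
    and "\<forall>s t. 0 \<le> s \<longrightarrow> s \<le> t \<longrightarrow> t \<le> 1 \<longrightarrow> f t \<le> f s"
    using assms unfolding monotone_allocs_def subgraph_def by blast
  moreover from this(3) have "antimono_on {0..1} f" by (auto intro: monotone_onI)
  ultimately show thesis using that by blast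
qed

lemma monotone_allocs_nonempty: "monotone_allocs \<noteq> {}"
  unfolding monotone_allocs_def by (auto intro!: exI[of _ "\<lambda>_. 0"])

lemma subgraph_lin_interp_in_sieve:
  assumes "antimono_on {0..1} f"
  shows "subgraph (lin_interp (2 ^ (k - 1)) f) \<in> sieve k"
proof -
  define T :: nat where "T = 2 ^ (k - 1)"
  have "f (real (Suc j) / T) \<le> f (real j / T)" if "j < T" for j
    using that by (intro monotone_onD[OF assms]) (auto simp: field_simps)
  then show ?thesis
    unfolding sieve_def subgraph_def lin_interp_def Let_def T_def[symmetric]
    by (auto intro!: exI[of _ "\<lambda>i. f (real i / T)"])
qed

lemma hat_fn_outside:
  fixes T i :: nat and x :: real
  assumes "0 < T" "1 \<le> \<bar>T * x - i\<bar>"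
  shows "hat_fn T i x = 0"
proof -
  have "\<bar>T * x - i\<bar> \<le> 1" if "(real i - 1) / T \<le> x" "x \<le> (real i + 1) / T"
    using that assms(1) by (simp add: field_simps)
  with assms(2) show ?thesis unfolding hat_fn_def by force
qed

lemma hat_fn_inside:
  fixes T i :: nat and x :: real
  assumes "0 < T" "\<bar>T * x - i\<bar> \<le> 1" "0 \<le> x" "x \<le> 1"
  shows "hat_fn T i x = 1 - \<bar>T * x - i\<bar>"
proof -
  have "(real i - 1) / T \<le> x" "x \<le> (real i + 1) / T"
    using assms by (simp_all add: field_simps)
  with assms(3,4) show ?thesis unfolding hat_fn_def by simp
qed

lemma borel_measurable_hat_fn [measurable]: "hat_fn T i \<in> borel_measurable borel"
  unfolding hat_fn_def by measurable

lemma sum_hat_fn_on_cell: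
  fixes T j :: nat and x :: real
  assumes "j < T" "real j \<le> T * x" "T * x \<le> real j + 1"
  shows "(\<Sum>i = 0..T. \<theta> i * hat_fn T i x) = \<theta> j * (real j + 1 - T * x) + \<theta> (Suc j) * (T * x - j)"
proof -
  have T: "0 < T" using assms(1) by simp
  have "0 \<le> T * x" "T * x \<le> T * 1" using assms by linarith+
  then have x: "0 \<le> x" "x \<le> 1"
    using T by (simp_all add: zero_le_mult_iff)
  have "hat_fn T i x = 0" if "i \<notin> {j, Suc j}" for i
  proof (rule hat_fn_outside[OF T])
    have "real i + 1 \<le> j \<or> j + 2 \<le> real i" using that by auto
    then show "1 \<le> \<bar>T * x - i\<bar>" using assms by linarith
  qed
  then have "(\<Sum>i = 0..T. \<theta> i * hat_fn T i x) = (\<Sum>i \<in> {j, Suc j}. \<theta> i * hat_fn T i x)"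
    by (intro sum.mono_neutral_right) (use assms(1) in auto)
  also have "\<dots> = \<theta> j * (real j + 1 - T * x) + \<theta> (Suc j) * (T * x - j)"
    using assms hat_fn_inside[OF T _ x, of j] hat_fn_inside[OF T _ x, of "Suc j"] by simp
  finally show ?thesis .
qed

lemma grid_cell_exists:
  fixes T :: nat and t :: real
  assumes "1 \<le> T" "0 \<le> t" "t \<le> 1"
  obtains j where "j < T" "real j \<le> T * t" "T * t \<le> real j + 1"
proof -
  define j where "j = min (nat \<lfloor>T * t\<rfloor>) (T - 1)"
  have "T * t \<le> T" using assms by (simp add: mult_left_le)
  then have "j < T" "real j \<le> T * t" "T * t \<le> real j + 1"
    using assms unfolding j_def by (auto simp: min_def of_nat_diff) linarith+
  with that show thesis .
qed

lemma lin_interp_on_cell: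
  assumes f: "antimono_on {0..1} f" and j: "j < T" "real j \<le> T * t" "T * t \<le> real j + 1"
  shows "f (real (Suc j) / T) \<le> lin_interp T f t \<and> lin_interp T f t \<le> f (real j / T)"
proof -
  define lo hi where "lo = f (real (Suc j) / T)" and "hi = f (real j / T)"
  define a where "a = real j + 1 - T * t"
  have a: "0 \<le> a" "0 \<le> 1 - a" using j unfolding a_def by auto
  have "lo \<le> hi"
    unfolding lo_def hi_def using j(1) by (intro monotone_onD[OF f]) (auto simp: field_simps)
  with a have "0 \<le> (hi - lo) * a" "0 \<le> (hi - lo) * (1 - a)" by simp_all
  moreover have "lin_interp T f t = hi * a + lo * (1 - a)"
    unfolding lin_interp_def lo_def hi_def a_def using sum_hat_fn_on_cell[OF j] by simp
  ultimately have "lo \<le> lin_interp T f t" "lin_interp T f t \<le> hi"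
    by (simp_all add: algebra_simps)
  then show ?thesis unfolding lo_def hi_def ..
qed

text \<open>On each grid cell both boundaries lie between the values of f at the cell's end points, and
  the staircase is the union of these ranges over the cells.\<close>

lemma subgraph_lin_interp_agree:
  assumes f: "antimono_on {0..1} f" and T: "1 \<le> T" and x: "x \<notin> staircase T f"
  shows "x \<in> subgraph f \<longleftrightarrow> x \<in> subgraph (lin_interp T f)"
proof (cases "x \<in> unit_sq")
  case True
  obtain x1 x2 where x12: "x = (x1, x2)" by (cases x)
  have x1: "0 \<le> x1" "x1 \<le> 1" using True unfolding x12 unit_sq_def by auto
  obtain j where j: "j < T" "real j \<le> T * x1" "T * x1 \<le> real j + 1"
    using grid_cell_exists[OF T x1] .
  have cell: "real j / T \<le> x1" "x1 \<le> real (Suc j) / T"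
    using j by (auto simp: field_simps)
  define lo hi where "lo = f (real (Suc j) / T)" and "hi = f (real j / T)"
  have "lo \<le> f x1" "f x1 \<le> hi"
    unfolding lo_def hi_def using cell x1 j(1) by (auto intro!: monotone_onD[OF f] simp: field_simps)
  moreover have "lo \<le> lin_interp T f x1" "lin_interp T f x1 \<le> hi"
    using lin_interp_on_cell[OF f j] unfolding lo_def hi_def by auto
  moreover have "x2 < lo \<or> hi < x2"
  proof (rule ccontr)
    assume "\<not> (x2 < lo \<or> hi < x2)"
    then have "x \<in> {real j / T .. real (Suc j) / T} \<times> {lo .. hi}"
      using cell unfolding x12 by simp
    with x j(1) show False unfolding staircase_def lo_def hi_def by blast
  qed
  ultimately show ?thesis
    using True unfolding x12 subgraph_def by auto
qed (simp add: subgraph_def)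

lemma emeasure_staircase_le:
  assumes f01: "f ` {0..1} \<subseteq> {0..1}" and f: "antimono_on {0..1} f" and T: "1 \<le> T"
  shows "emeasure lborel (staircase T f) \<le> ennreal (1 / T)"
proof -
  define F where "F n = f (real n / T)" for n
  have F: "F (Suc j) \<le> F j" if "j < T" for j
    unfolding F_def using that by (intro monotone_onD[OF f]) (auto simp: field_simps)
  have "emeasure lborel (staircase T f)
      \<le> (\<Sum>j<T. emeasure lborel ({real j / T .. real (Suc j) / T} \<times> {F (Suc j) .. F j}))"
    unfolding staircase_def F_def
    by (intro emeasure_subadditive_finite finite_lessThan) (auto intro: sets_Times_atLeastAtMost)
  also have "\<dots> = (\<Sum>j<T. ennreal ((1 / T) * (F j - F (Suc j))))"
    using F by (intro sum.cong refl)
      (simp add: emeasure_Times_atLeastAtMost divide_right_mono diff_divide_distrib[symmetric])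
  also have "\<dots> = ennreal (\<Sum>j<T. (1 / T) * (F j - F (Suc j)))"
    using F by (intro sum_ennreal) auto
  also have "\<dots> \<le> ennreal (1 / T)"
  proof (rule ennreal_leI)
    have "F 0 \<in> {0..1}" "F T \<in> {0..1}"
      using f01 T unfolding F_def by (auto simp: image_subset_iff)
    then have "(1 / T) * (F 0 - F T) \<le> 1 / T" by (intro mult_left_le) auto
    then show "(\<Sum>j<T. (1 / T) * (F j - F (Suc j))) \<le> 1 / T"
      by (simp only: sum_distrib_left[symmetric] sum_lessThan_telescope')
  qed
  finally show ?thesis .
qed

lemma sets_subgraph:
  assumes [measurable]: "g \<in> borel_measurable borel"
  shows "subgraph g \<in> sets borel"
proof -
  have "Measurable.pred (borel \<Otimes>\<^sub>M borel)
      (\<lambda>x::real \<times> real. 0 \<le> fst x \<and> fst x \<le> 1 \<and> 0 \<le> snd x \<and> snd x \<le> 1 \<and> snd x \<le> g (fst x))"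
    by measurable
  then show ?thesis
    unfolding subgraph_def unit_sq_def borel_prod[symmetric] pred_def
    by (simp add: space_pair_measure mem_Times_iff conj_ac)
qed

lemma sets_subgraph_antimono:
  assumes f: "antimono_on {0..1} f"
  shows "subgraph f \<in> sets borel"
proof -
  define h where "h t = f (max 0 (min 1 t))" for t
  have "mono (\<lambda>t. - h t)"
    unfolding h_def by (intro monoI) (auto intro!: monotone_onD[OF f])
  then have "(\<lambda>t. - (- h t)) \<in> borel_measurable borel"
    by (intro borel_measurable_uminus borel_measurable_mono)
  moreover have "subgraph f = subgraph h"
    unfolding subgraph_def unit_sq_def h_def by auto
  ultimately show ?thesis using sets_subgraph by simp
qed

lemma sets_staircase: "staircase T f \<in> sets borel"
  unfolding staircase_def by (intro sets.finite_UN finite_lessThan ballI sets_Times_atLeastAtMost)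

lemma borel_measurable_lin_interp: "lin_interp T f \<in> borel_measurable borel"
  unfolding lin_interp_def[abs_def] by measurable

subsection \<open>Inverse propensity weighting\<close>

definition ipw_score :: "(real \<times> real \<Rightarrow> real) \<Rightarrow> obs \<Rightarrow> real" where
  "ipw_score e \<omega> = Yv \<omega> * Dv \<omega> / e (Xv \<omega>) - Yv \<omega> * (1 - Dv \<omega>) / (1 - e (Xv \<omega>))"

lemma welfare_eq_integral_ipw_score:
  "welfare P e G = (\<integral>\<omega>. ipw_score e \<omega> * indicator G (Xv \<omega>) \<partial>P)"
  unfolding welfare_def ipw_score_def ..

lemma abs_ipw_term_le:
  fixes y d p M \<kappa> :: real
  assumes "\<bar>y\<bar> \<le> M / 2" "d \<in> {0, 1}" "\<kappa> \<le> p" "p \<le> 1 - \<kappa>" "0 < \<kappa>"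
  shows "\<bar>y * d / p - y * (1 - d) / (1 - p)\<bar> \<le> M / (2 * \<kappa>)"
proof -
  have "\<bar>y\<bar> / q \<le> M / (2 * \<kappa>)" if "\<kappa> \<le> q" for q
  proof -
    have "\<bar>y\<bar> / q \<le> \<bar>y\<bar> / \<kappa>" using that assms(5) by (simp add: divide_left_mono)
    also have "\<dots> \<le> (M / 2) / \<kappa>" using assms(1,5) by (intro divide_right_mono) auto
    finally show ?thesis by simp
  qed
  from this[of p] this[of "1 - p"] show ?thesis
    using assms(2-5) by (auto simp: abs_divide)
qed

lemma
  assumes "in_P_M_kappa M \<kappa> P e"
  shows measurable_Xv: "Xv \<in> measurable P borel"
    and borel_measurable_ipw_score: "ipw_score e \<in> borel_measurable P"
proof -
  have "sets P = sets borel"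
    using assms unfolding in_P_M_kappa_def by blast
  then have sets: "sets P = sets (borel \<Otimes>\<^sub>M (borel \<Otimes>\<^sub>M borel))"
    unfolding borel_prod .
  have [measurable]: "e \<in> borel_measurable borel"
    using assms unfolding in_P_M_kappa_def is_propensity_def by simp
  note meas = measurable_cong_sets[OF sets refl]
  show [measurable]: "Xv \<in> measurable P borel"
    unfolding meas Xv_def[abs_def] by measurable
  have [measurable]: "Yv \<in> borel_measurable P"
    unfolding meas Yv_def[abs_def] by measurable
  have [measurable]: "Dv \<in> borel_measurable P"
    unfolding meas Dv_def[abs_def] by measurable
  show "ipw_score e \<in> borel_measurable P"
    unfolding ipw_score_def[abs_def] by measurable
qed

lemma in_P_M_kappa_nonneg:
  assumes "in_P_M_kappa M \<kappa> P e"
  shows "0 \<le> M"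
proof -
  interpret prob_space P using assms unfolding in_P_M_kappa_def by blast
  have "AE \<omega> in P. Yv \<omega> \<in> {-M/2..M/2}" using assms unfolding in_P_M_kappa_def by blast
  then have "AE \<omega> in P. 0 \<le> M" by eventually_elim auto
  then show ?thesis by simp
qed

lemma AE_abs_ipw_score_le:
  assumes "in_P_M_kappa M \<kappa> P e" "0 < \<kappa>"
  shows "AE \<omega> in P. \<bar>ipw_score e \<omega>\<bar> \<le> M / (2 * \<kappa>)"
proof -
  have e: "\<forall>x \<in> unit_sq. \<kappa> \<le> e x \<and> e x \<le> 1 - \<kappa>"
    using assms(1) unfolding in_P_M_kappa_def by auto
  have "AE \<omega> in P. Yv \<omega> \<in> {-M/2..M/2}" "AE \<omega> in P. Dv \<omega> \<in> {0,1}"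
    "AE \<omega> in P. Xv \<omega> \<in> unit_sq"
    using assms(1) unfolding in_P_M_kappa_def by auto
  then show ?thesis
  proof eventually_elim
    case (elim \<omega>)
    then show ?case
      unfolding ipw_score_def using e assms(2) by (intro abs_ipw_term_le) auto
  qed
qed

lemma emeasure_preimage_le_density_bound:
  assumes "density_bounded A P" "Xv \<in> measurable P borel" "B \<in> sets borel"
  shows "emeasure P (Xv -` B \<inter> space P) \<le> ennreal A * emeasure lborel B"
proof -
  obtain \<rho> :: "real \<times> real \<Rightarrow> real" where [measurable]: "\<rho> \<in> borel_measurable borel"
    and \<rho>: "\<forall>x. 0 \<le> \<rho> x \<and> \<rho> x \<le> A"
    and distr: "distr P lborel Xv = density lborel (\<lambda>x. ennreal (\<rho> x))"
    using assms(1) unfolding density_bounded_def by auto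
  have "emeasure P (Xv -` B \<inter> space P) = emeasure (distr P lborel Xv) B"
    using assms by (simp add: emeasure_distr)
  also have "\<dots> = (\<integral>\<^sup>+ x. ennreal (\<rho> x) * indicator B x \<partial>lborel)"
    unfolding distr by (rule emeasure_density) (use assms(3) in simp_all)
  also have "\<dots> \<le> (\<integral>\<^sup>+ x. ennreal A * indicator B x \<partial>lborel)"
    using \<rho> by (intro nn_integral_mono) (auto simp: indicator_def ennreal_leI)
  also have "\<dots> = ennreal A * emeasure lborel B"
    by (rule nn_integral_cmult_indicator) (use assms(3) in simp)
  finally show ?thesis .
qed

lemma welfare_monotone_le_sieve:
  assumes P: "in_P_M_kappa M \<kappa> P e" and A: "density_bounded A P" "0 \<le> A" and "0 < \<kappa>"
    and G: "G \<in> monotone_allocs"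
  shows "\<exists>G' \<in> sieve k. welfare P e G \<le> welfare P e G' + M / (2 * \<kappa>) * (A / 2 ^ (k - 1))"
proof -
  interpret prob_space P using P unfolding in_P_M_kappa_def by blast
  define T :: nat where "T = 2 ^ (k - 1)"
  have T: "1 \<le> T" unfolding T_def by simp
  obtain f where G_eq: "G = subgraph f" and f01: "f ` {0..1} \<subseteq> {0..1}"
    and f: "antimono_on {0..1} f"
    using G by (rule monotone_allocsE)
  define G' where "G' = subgraph (lin_interp T f)"
  have "G' \<in> sieve k"
    unfolding G'_def T_def using f by (rule subgraph_lin_interp_in_sieve)
  have prob_staircase: "prob (Xv -` staircase T f \<inter> space P) \<le> A / T"
  proof -
    have "emeasure P (Xv -` staircase T f \<inter> space P) \<le> ennreal A * ennreal (1 / T)"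
      using emeasure_preimage_le_density_bound[OF A(1) measurable_Xv[OF P] sets_staircase]
        emeasure_staircase_le[OF f01 f T] by (meson dual_order.trans mult_left_mono zero_le)
    then show ?thesis
      using A(2) T by (simp add: emeasure_eq_measure ennreal_mult'[symmetric] ennreal_le_iff)
  qed
  have "welfare P e G - welfare P e G' \<le> M / (2 * \<kappa>) * prob (Xv -` staircase T f \<inter> space P)"
    unfolding welfare_eq_integral_ipw_score G_eq G'_def
    using borel_measurable_ipw_score[OF P] measurable_Xv[OF P] sets_subgraph_antimono[OF f]
      sets_subgraph[OF borel_measurable_lin_interp] sets_staircase
      AE_abs_ipw_score_le[OF P \<open>0 < \<kappa>\<close>] subgraph_lin_interp_agree[OF f T]
    by (rule integral_indicator_diff_le)
  also have "\<dots> \<le> M / (2 * \<kappa>) * (A / T)"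
    using prob_staircase in_P_M_kappa_nonneg[OF P] \<open>0 < \<kappa>\<close> by (intro mult_left_mono) auto
  finally show ?thesis
    using \<open>G' \<in> sieve k\<close> unfolding T_def by force
qed

theorem proposition5p1:
  fixes M \<kappa> A :: real and k :: nat
    and P :: "obs measure" and e :: "real \<times> real \<Rightarrow> real"
  assumes "0 < \<kappa>" and "\<kappa> < 1/2" and "0 < A" and "1 \<le> k"
    and "in_P_M_kappa M \<kappa> P e"
    and "density_bounded A P"
  shows "opt_welfare P e monotone_allocs - opt_welfare P e (sieve k) \<le> A * (M / \<kappa>) * (1/2) ^ k"
proof -
  interpret prob_space P using assms(5) unfolding in_P_M_kappa_def by blast
  have "welfare P e G \<le> M / (2 * \<kappa>)" for G
    unfolding welfare_eq_integral_ipw_score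
    using AE_abs_ipw_score_le[OF assms(5,1)] in_P_M_kappa_nonneg[OF assms(5)] assms(1)
    by (intro integral_le_of_AE_le) (auto simp: indicator_def elim!: eventually_mono)
  then have "bdd_above (welfare P e ` sieve k)" by (intro bdd_aboveI) auto
  then have "opt_welfare P e monotone_allocs
      \<le> opt_welfare P e (sieve k) + M / (2 * \<kappa>) * (A / 2 ^ (k - 1))"
    unfolding opt_welfare_def using monotone_allocs_nonempty
    by (intro cSUP_le_cSUP_plus welfare_monotone_le_sieve[OF assms(5,6)]) (use assms in auto)
  moreover have "M / (2 * \<kappa>) * (A / 2 ^ (k - 1)) = A * (M / \<kappa>) * (1/2) ^ k"
    using assms(4) by (cases k) (simp_all add: field_simps)
  ultimately show ?thesis by linarith
qed

end
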